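(* Let $m\ge0$ be an integer and assume (A1) and (A2) from the context. Consider the system of equations in the unknowns $\{A(j),k_i(j)\}_{N_0\le j\le N_0+m,\,1\le i\le j}$ consisting of the terminal conditions $$A(N_0+m)=\frac{1}{\beta_\Sigma(N_0+m)},\qquad k_i(N_0+m)=\frac{\beta_i(N_0+m)A(N_0+m)-1}{\alpha_i}\quad(1\le i\le N_0+m),$$ and, for $N_0\le j<N_0+m$ and $1\le i\le j$, $$\frac{1}{A(j)}=\beta_\Sigma(j)+\lambda-\Big(\alpha_\Sigma(j)\sum_{i=1}^j\frac{\lambda A(j+1)e^{-\alpha_i(k_i(j+1)-k_i(j))}}{\alpha_i}\Big)\frac{1}{A(j)},\qquad k_i(j)=\frac{(\beta_i(j)+\lambda)A(j)-1}{\alpha_i}-\frac{\lambda A(j+1)e^{-\alpha_i(k_i(j+1)-k_i(j))}}{\alpha_i}.$$ Then this system has a unique solution with $A(j)>0$ for all $N_0\le j\le N_0+m$, and this solution satisfies, for $N_0\le j\le N_0+m$ and $1\le i\le j$, $$\frac{1}{\overline{\beta}+\lambda}<A(j)\le\frac{1}{\underline{\beta}},\qquad A(j)e^{-\alpha_ik_i(j)}\le\frac{1}{\underline{\beta}},\qquad -\ln\Big(\frac{\overline{\beta}+\lambda}{\underline{\beta}}\Big)\le\alpha_ik_i(j)\le\frac{\overline{\beta}+\lambda}{\underline{\beta}}-1.$$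
   Context: $N_0\ge1$ is an integer, $\lambda>0$, and for each $i\in\mathbb{N}$, $\alpha_i>0$, $\rho_i>0$, and $\mu_i(j),\sigma_i(j)\in\mathbb{R}$ for $j\ge N_0\vee i$. Define $\alpha_\Sigma(j):=(\sum_{i=1}^j1/\alpha_i)^{-1}$, $\beta_i(j):=\rho_i+\alpha_i\mu_i(j)-\frac12\alpha_i^2\sigma_i^2(j)$, $\beta_\Sigma(j):=\alpha_\Sigma(j)\sum_{i=1}^j\beta_i(j)/\alpha_i$. Assumptions: (A1) for each $i$, $\{\mu_i(j)\}_{j\ge N_0\vee i}$ and $\{\sigma_i(j)\}_{j\ge N_0\vee i}$ are bounded; (A2) there are constants $0<\underline{\beta}\le\overline{\beta}$ with $\underline{\beta}\le\beta_i(j)\le\overline{\beta}$ for all $j\ge N_0$, $1\le i\le j$. *)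

theory Defs
  imports Complex_Main
begin

definition alpha_Sigma :: "(nat \<Rightarrow> real) \<Rightarrow> nat \<Rightarrow> real" where
  "alpha_Sigma \<alpha> j = inverse (\<Sum>i=1..j. 1 / \<alpha> i)"

definition beta :: "(nat \<Rightarrow> real) \<Rightarrow> (nat \<Rightarrow> real) \<Rightarrow> (nat \<Rightarrow> nat \<Rightarrow> real)
    \<Rightarrow> (nat \<Rightarrow> nat \<Rightarrow> real) \<Rightarrow> nat \<Rightarrow> nat \<Rightarrow> real" where
  "beta \<rho> \<alpha> \<mu> \<sigma> i j = \<rho> i + \<alpha> i * \<mu> i j - 1/2 * (\<alpha> i)^2 * (\<sigma> i j)^2"

definition beta_Sigma :: "(nat \<Rightarrow> real) \<Rightarrow> (nat \<Rightarrow> real) \<Rightarrow> (nat \<Rightarrow> nat \<Rightarrow> real)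
    \<Rightarrow> (nat \<Rightarrow> nat \<Rightarrow> real) \<Rightarrow> nat \<Rightarrow> real" where
  "beta_Sigma \<rho> \<alpha> \<mu> \<sigma> j = alpha_Sigma \<alpha> j * (\<Sum>i=1..j. beta \<rho> \<alpha> \<mu> \<sigma> i j / \<alpha> i)"

definition lemma_system ::
  "nat \<Rightarrow> nat \<Rightarrow> real \<Rightarrow> (nat \<Rightarrow> real) \<Rightarrow> (nat \<Rightarrow> real) \<Rightarrow> (nat \<Rightarrow> nat \<Rightarrow> real)
    \<Rightarrow> (nat \<Rightarrow> nat \<Rightarrow> real) \<Rightarrow> (nat \<Rightarrow> real) \<Rightarrow> (nat \<Rightarrow> nat \<Rightarrow> real) \<Rightarrow> bool" where
  "lemma_system N0 m lam \<alpha> \<rho> \<mu> \<sigma> A k \<longleftrightarrow>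
     A (N0 + m) = 1 / beta_Sigma \<rho> \<alpha> \<mu> \<sigma> (N0 + m) \<and>
     (\<forall>i\<in>{1..N0+m}. k i (N0 + m) =
        (beta \<rho> \<alpha> \<mu> \<sigma> i (N0 + m) * A (N0 + m) - 1) / \<alpha> i) \<and>
     (\<forall>j. N0 \<le> j \<and> j < N0 + m \<longrightarrow>
        1 / A j = beta_Sigma \<rho> \<alpha> \<mu> \<sigma> j + lam
          - (alpha_Sigma \<alpha> j *
              (\<Sum>i=1..j. lam * A (j+1) * exp (- \<alpha> i * (k i (j+1) - k i j)) / \<alpha> i))
            * (1 / A j)) \<and>
     (\<forall>j. N0 \<le> j \<and> j < N0 + m \<longrightarrow> (\<forall>i\<in>{1..j}.
        k i j = ((beta \<rho> \<alpha> \<mu> \<sigma> i j + lam) * A j - 1) / \<alpha> i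
          - lam * A (j+1) * exp (- \<alpha> i * (k i (j+1) - k i j)) / \<alpha> i))"

end

theory Submission
  imports Defs
begin

(* Write x_i = alpha_i k_i(j). Once the values at time j+1 are known, the k-equations at time j
   read x_i + c_i exp x_i = (beta_i(j) + lam) A(j) - 1 with c_i = lam A(j+1) exp (- x_i(j+1)) > 0,
   and given these and A(j) > 0 the A-equation is equivalent to sum_i x_i / alpha_i = 0.
   As x + c exp x is an increasing bijection of the reals, every x_i is an increasing continuous
   function of A(j), so this balance condition has exactly one root. The terminal condition is
   the same problem with lam = 0 and c = 0, and backward induction on j gives existence and
   uniqueness. The bounds come from an index with x_i >= 0 and one with x_i <= 0, together with
   (1 + x) exp (- x) <= 1; they reproduce exactly c_i <= lam / blo for the next step down. *)

section \<open>The increasing bijection x + c exp x\<close>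

lemma strict_mono_lin_exp:
  fixes c :: real
  assumes "0 \<le> c"
  shows "strict_mono (\<lambda>x. x + c * exp x)"
  by (rule strict_monoI) (simp add: add_less_le_mono mult_left_mono assms)

lemma lin_exp_le_iff:
  fixes c x y :: real
  assumes "0 \<le> c"
  shows "x + c * exp x \<le> y + c * exp y \<longleftrightarrow> x \<le> y"
  by (rule strict_mono_less_eq[OF strict_mono_lin_exp[OF assms]])

lemma lin_exp_surj:
  fixes c y :: real
  assumes "0 \<le> c"
  shows "\<exists>x. x + c * exp x = y"
proof -
  define x0 where "x0 = min 0 (y - c)"
  have "c * exp x0 \<le> c" using assms by (simp add: x0_def mult_left_le)
  then have "x0 + c * exp x0 \<le> y" by (simp add: x0_def)
  moreover have "y \<le> y + c * exp y" using assms by simp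
  moreover have "x0 \<le> y" using assms by (simp add: x0_def)
  ultimately show ?thesis
    using IVT[of "\<lambda>x. x + c * exp x" x0 y y] by (auto intro!: continuous_intros)
qed

definition lin_exp_inv :: "real \<Rightarrow> real \<Rightarrow> real" where
  "lin_exp_inv c y = (THE x. x + c * exp x = y)"

lemma lin_exp_inv_eq_iff:
  assumes "0 \<le> c"
  shows "lin_exp_inv c y = x \<longleftrightarrow> x + c * exp x = y"
proof -
  have unique: "\<exists>!x. x + c * exp x = y"
  proof (rule ex_ex1I)
    show "\<exists>x. x + c * exp x = y" by (rule lin_exp_surj[OF assms])
    show "x = x'" if "x + c * exp x = y" "x' + c * exp x' = y" for x x'
      using strict_mono_eq[OF strict_mono_lin_exp[OF assms], of x x'] that by argo
  qed
  show ?thesis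
    unfolding lin_exp_inv_def
    using theI'[OF unique] the1_equality[OF unique, of x] by auto
qed

lemma lin_exp_inv:
  "0 \<le> c \<Longrightarrow> lin_exp_inv c y + c * exp (lin_exp_inv c y) = y"
  using lin_exp_inv_eq_iff by blast

lemma strict_mono_lin_exp_inv:
  assumes "0 \<le> c"
  shows "strict_mono (lin_exp_inv c)"
proof (rule strict_monoI)
  fix y y' :: real assume "y < y'"
  show "lin_exp_inv c y < lin_exp_inv c y'"
  proof (rule ccontr)
    assume "\<not> lin_exp_inv c y < lin_exp_inv c y'"
    then have "y' \<le> y"
      using lin_exp_le_iff[OF assms, of "lin_exp_inv c y'" "lin_exp_inv c y"]
      by (simp add: lin_exp_inv[OF assms])
    with \<open>y < y'\<close> show False by simp
  qed
qed

lemma lin_exp_inv_nonneg_iff: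
  assumes "0 \<le> c"
  shows "0 \<le> lin_exp_inv c y \<longleftrightarrow> c \<le> y"
proof -
  have "lin_exp_inv c c = 0" using assms by (simp add: lin_exp_inv_eq_iff)
  then show ?thesis using strict_mono_less_eq[OF strict_mono_lin_exp_inv[OF assms], of c y] by simp
qed

lemma lin_exp_inv_nonpos_iff:
  assumes "0 \<le> c"
  shows "lin_exp_inv c y \<le> 0 \<longleftrightarrow> y \<le> c"
proof -
  have "lin_exp_inv c c = 0" using assms by (simp add: lin_exp_inv_eq_iff)
  then show ?thesis using strict_mono_less_eq[OF strict_mono_lin_exp_inv[OF assms], of y c] by simp
qed

lemma isCont_lin_exp_inv:
  assumes "0 \<le> c"
  shows "isCont (lin_exp_inv c) y"
proof -
  have "isCont (lin_exp_inv c) ((\<lambda>x. x + c * exp x) (lin_exp_inv c y))"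
    by (rule isCont_inverse_function[where d = 1])
      (auto simp: assms lin_exp_inv_eq_iff intro!: continuous_intros)
  then show ?thesis using lin_exp_inv[OF assms] by simp
qed

lemma isCont_lin_exp_inv' [continuous_intros]:
  "0 \<le> c \<Longrightarrow> isCont f x \<Longrightarrow> isCont (\<lambda>x. lin_exp_inv c (f x)) x"
  using isCont_o2[OF _ isCont_lin_exp_inv] by blast

lemma lin_exp_weighted_le:
  fixes c x y :: real
  assumes "x + c * exp x = y" "0 \<le> c"
  shows "(1 + y) * exp (- x) \<le> 1 + c"
proof -
  have "(1 + y) * exp (- x) = (1 + x) * exp (- x) + c"
    using assms(1) by (auto simp: algebra_simps exp_minus_inverse)
  also have "(1 + x) * exp (- x) \<le> 1"
    using exp_ge_add_one_self[of x] by (simp add: exp_minus field_simps)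
  finally show ?thesis by simp
qed

section \<open>One backward step\<close>

text \<open>In the step from \<open>j + 1\<close> to \<open>j\<close>: \<open>x i = \<alpha> i * k i j\<close>, \<open>w i = 1 / \<alpha> i\<close>,
  \<open>b i = beta \<rho> \<alpha> \<mu> \<sigma> i j + lam\<close> and \<open>c i = lam * A (j+1) * exp (- \<alpha> i * k i (j+1))\<close>;
  the terminal condition is the case \<open>lam = 0\<close>, \<open>c = 0\<close>.\<close>

definition step_system ::
    "'a set \<Rightarrow> ('a \<Rightarrow> real) \<Rightarrow> ('a \<Rightarrow> real) \<Rightarrow> ('a \<Rightarrow> real) \<Rightarrow> real \<Rightarrow> ('a \<Rightarrow> real) \<Rightarrow> bool" where
  "step_system I w b c a x \<longleftrightarrow>
     (\<forall>i\<in>I. x i + c i * exp (x i) = b i * a - 1) \<and> (\<Sum>i\<in>I. w i * x i) = 0"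

definition step_balance ::
    "'a set \<Rightarrow> ('a \<Rightarrow> real) \<Rightarrow> ('a \<Rightarrow> real) \<Rightarrow> ('a \<Rightarrow> real) \<Rightarrow> real \<Rightarrow> real" where
  "step_balance I w b c a = (\<Sum>i\<in>I. w i * lin_exp_inv (c i) (b i * a - 1))"

lemma step_system_iff:
  assumes "\<forall>i\<in>I. 0 \<le> c i"
  shows "step_system I w b c a x \<longleftrightarrow>
    (\<forall>i\<in>I. x i = lin_exp_inv (c i) (b i * a - 1)) \<and> step_balance I w b c a = 0"
proof -
  have "(\<forall>i\<in>I. x i + c i * exp (x i) = b i * a - 1) \<longleftrightarrow>
      (\<forall>i\<in>I. x i = lin_exp_inv (c i) (b i * a - 1))"
    using assms lin_exp_inv_eq_iff by metis
  moreover have "(\<Sum>i\<in>I. w i * x i) = step_balance I w b c a"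
    if "\<forall>i\<in>I. x i = lin_exp_inv (c i) (b i * a - 1)"
    unfolding step_balance_def using that by (intro sum.cong) auto
  ultimately show ?thesis unfolding step_system_def by auto
qed

lemma step_system_cong:
  "\<forall>i\<in>I. c' i = c i \<and> x' i = x i \<Longrightarrow> step_system I w b c' a x' \<longleftrightarrow> step_system I w b c a x"
  unfolding step_system_def by (metis (no_types, lifting) sum.cong)

lemma strict_mono_step_balance:
  assumes "finite I" "I \<noteq> {}" "\<forall>i\<in>I. 0 < w i \<and> 0 < b i \<and> 0 \<le> c i"
  shows "strict_mono (step_balance I w b c)"
proof (rule strict_monoI)
  fix a a' :: real assume "a < a'"
  show "step_balance I w b c a < step_balance I w b c a'"
    unfolding step_balance_def
  proof (rule sum_strict_mono[OF assms(1,2)])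
    fix i assume i: "i \<in> I"
    then have "b i * a - 1 < b i * a' - 1" using \<open>a < a'\<close> assms(3) by simp
    then have "lin_exp_inv (c i) (b i * a - 1) < lin_exp_inv (c i) (b i * a' - 1)"
      using strict_mono_lin_exp_inv assms(3) i by (simp add: strict_mono_less)
    then show "w i * lin_exp_inv (c i) (b i * a - 1) < w i * lin_exp_inv (c i) (b i * a' - 1)"
      using assms(3) i by simp
  qed
qed

lemma step_system_exists:
  assumes "finite I" "I \<noteq> {}" "\<forall>i\<in>I. 0 < w i \<and> 0 < b i \<and> 0 \<le> c i"
  shows "\<exists>a x. step_system I w b c a x"
proof -
  define a1 where "a1 = (\<Sum>i\<in>I. (1 + c i) / b i)"
  have "step_balance I w b c 0 \<le> 0"
    unfolding step_balance_def
  proof (rule sum_nonpos)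
    fix i assume "i \<in> I"
    then have "0 \<le> c i" "0 < w i" using assms(3) by auto
    then show "w i * lin_exp_inv (c i) (b i * 0 - 1) \<le> 0"
      by (simp add: lin_exp_inv_nonpos_iff mult_nonneg_nonpos)
  qed
  moreover have "0 \<le> step_balance I w b c a1"
    unfolding step_balance_def
  proof (rule sum_nonneg)
    fix i assume i: "i \<in> I"
    then have c: "0 \<le> c i" and w: "0 < w i" and b: "0 < b i" using assms(3) by auto
    have "(1 + c i) / b i \<le> a1"
      unfolding a1_def using assms i by (intro member_le_sum) auto
    then have "c i \<le> b i * a1 - 1"
      using b by (simp add: field_simps)
    then show "0 \<le> w i * lin_exp_inv (c i) (b i * a1 - 1)"
      using c w by (simp add: lin_exp_inv_nonneg_iff)
  qed
  moreover have "0 \<le> a1"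
    unfolding a1_def using assms(3) by (intro sum_nonneg) auto
  moreover have "isCont (step_balance I w b c) a" for a
    unfolding step_balance_def using assms(3) by (force intro!: continuous_intros)
  ultimately obtain a where "step_balance I w b c a = 0"
    using IVT[of "step_balance I w b c" 0 0 a1] by blast
  then have "step_system I w b c a (\<lambda>i. lin_exp_inv (c i) (b i * a - 1))"
    using assms(3) by (simp add: step_system_iff)
  then show ?thesis by blast
qed

lemma step_system_unique:
  assumes "finite I" "I \<noteq> {}" "\<forall>i\<in>I. 0 < w i \<and> 0 < b i \<and> 0 \<le> c i"
    and "step_system I w b c a x" "step_system I w b c a' x'"
  shows "a' = a \<and> (\<forall>i\<in>I. x' i = x i)"
proof -
  have "\<forall>i\<in>I. 0 \<le> c i" using assms(3) by blast
  then have "step_balance I w b c a' = step_balance I w b c a"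
    and x: "\<forall>i\<in>I. x i = lin_exp_inv (c i) (b i * a - 1)"
    and x': "\<forall>i\<in>I. x' i = lin_exp_inv (c i) (b i * a' - 1)"
    using assms(4,5) by (simp_all add: step_system_iff)
  then have "a' = a"
    using strict_mono_eq[OF strict_mono_step_balance[OF assms(1-3)]] by blast
  with x x' show ?thesis by simp
qed

lemma step_system_brackets:
  assumes "step_system I w b c a x" "finite I" "I \<noteq> {}" "\<forall>i\<in>I. 0 < w i \<and> 0 \<le> c i"
  shows "\<exists>i\<in>I. 1 + c i \<le> b i * a" "\<exists>i\<in>I. b i * a \<le> 1 + c i"
proof -
  have eq: "x i + c i * exp (x i) = b i * a - 1" and c: "0 \<le> c i" and w: "0 < w i" if "i \<in> I" for i
    using assms(1,4) that unfolding step_system_def by auto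
  have sum: "(\<Sum>i\<in>I. w i * x i) = 0" using assms(1) unfolding step_system_def by blast
  obtain i where i: "i \<in> I" "0 \<le> w i * x i"
  proof (rule ccontr)
    assume "\<not> thesis"
    then have "0 < (\<Sum>i\<in>I. - (w i * x i))" using that assms(2,3) by (intro sum_pos) force+
    with sum show False by (simp add: sum_negf)
  qed
  then have "0 + c i * exp 0 \<le> x i + c i * exp (x i)"
    using w[OF i(1)] c[OF i(1)] lin_exp_le_iff[of "c i" 0 "x i"] by (simp add: zero_le_mult_iff)
  then show "\<exists>i\<in>I. 1 + c i \<le> b i * a" using eq i(1) by force
  obtain j where j: "j \<in> I" "w j * x j \<le> 0"
  proof (rule ccontr)
    assume "\<not> thesis"
    then have "0 < (\<Sum>i\<in>I. w i * x i)" using that assms(2,3) by (intro sum_pos) force+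
    with sum show False by simp
  qed
  then have "x j + c j * exp (x j) \<le> 0 + c j * exp 0"
    using w[OF j(1)] c[OF j(1)] lin_exp_le_iff[of "c j" "x j" 0] by (simp add: mult_le_0_iff)
  then show "\<exists>i\<in>I. b i * a \<le> 1 + c i" using eq j(1) by force
qed

lemma scaled_le_imp_le_one_div:
  fixes blo \<beta> l t :: real
  assumes "0 < blo" "blo \<le> \<beta>" "0 \<le> l" "(\<beta> + l) * t \<le> 1 + l / blo"
  shows "t \<le> 1 / blo"
proof (cases "t \<le> 0")
  case True
  then show ?thesis using assms(1) by (smt (verit) divide_pos_pos)
next
  case False
  have "(blo + l) * t \<le> (\<beta> + l) * t" using assms(2) False by (intro mult_right_mono) auto
  also have "\<dots> \<le> 1 + l / blo" by (rule assms(4))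
  also have "\<dots> = (blo + l) * (1 / blo)" using assms(1) by (simp add: field_simps)
  finally have "(blo + l) * t \<le> (blo + l) * (1 / blo)" .
  moreover have "0 < blo + l" using assms(1,3) by simp
  ultimately show ?thesis by (simp only: mult_le_cancel_left_pos)
qed

lemma step_system_bounds:
  fixes \<beta> c w x :: "'a \<Rightarrow> real" and l blo bhi a :: real
  assumes sol: "step_system I w (\<lambda>i. \<beta> i + l) c a x" and I: "finite I" "I \<noteq> {}"
    and blo: "0 < blo" and l: "0 \<le> l"
    and coef: "\<forall>i\<in>I. 0 < w i \<and> 0 \<le> c i \<and> c i \<le> l / blo \<and> blo \<le> \<beta> i \<and> \<beta> i \<le> bhi"
  shows "\<exists>i\<in>I. 1 + c i \<le> (bhi + l) * a" and "a \<le> 1 / blo"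
    and "\<forall>i\<in>I. a * exp (- x i) \<le> 1 / blo \<and> x i \<le> (bhi + l) / blo - 1"
proof -
  have eq: "x i + c i * exp (x i) = (\<beta> i + l) * a - 1" if "i \<in> I" for i
    using sol that unfolding step_system_def by blast
  have brackets: "\<exists>i\<in>I. 1 + c i \<le> (\<beta> i + l) * a" "\<exists>i\<in>I. (\<beta> i + l) * a \<le> 1 + c i"
    using step_system_brackets[OF sol I] coef by auto
  then obtain i where i: "i \<in> I" "1 + c i \<le> (\<beta> i + l) * a" by blast
  have a: "0 < a"
  proof (rule ccontr)
    assume "\<not> 0 < a"
    moreover have "0 \<le> \<beta> i + l" using coef i(1) blo l by force
    ultimately have "(\<beta> i + l) * a \<le> 0" by (simp add: mult_nonneg_nonpos)
    with i(2) coef i(1) show False by force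
  qed
  have "(\<beta> i + l) * a \<le> (bhi + l) * a" using coef i(1) a by simp
  with i show "\<exists>i\<in>I. 1 + c i \<le> (bhi + l) * a" by force
  from brackets(2) obtain j where "j \<in> I" "(\<beta> j + l) * a \<le> 1 + c j" by blast
  then show a_le: "a \<le> 1 / blo"
    using coef blo l by (intro scaled_le_imp_le_one_div[of blo "\<beta> j" l]) force+
  show "\<forall>i\<in>I. a * exp (- x i) \<le> 1 / blo \<and> x i \<le> (bhi + l) / blo - 1"
  proof
    fix i assume i: "i \<in> I"
    have "(\<beta> i + l) * (a * exp (- x i)) = (1 + ((\<beta> i + l) * a - 1)) * exp (- x i)"
      by simp
    also have "\<dots> \<le> 1 + c i" using lin_exp_weighted_le[OF eq[OF i]] coef i by simp
    also have "\<dots> \<le> 1 + l / blo" using coef i by simp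
    finally have "a * exp (- x i) \<le> 1 / blo"
      using coef i blo l by (intro scaled_le_imp_le_one_div[of blo "\<beta> i" l]) auto
    moreover have "x i \<le> (\<beta> i + l) * a - 1"
      using eq[OF i] coef i by (smt (verit) exp_gt_zero mult_nonneg_nonneg)
    moreover have "(\<beta> i + l) * a \<le> (bhi + l) * (1 / blo)"
      using coef i a a_le l blo by (intro mult_mono) force+
    ultimately show "a * exp (- x i) \<le> 1 / blo \<and> x i \<le> (bhi + l) / blo - 1"
      by simp
  qed
qed

lemma neg_ln_less_of_bounds:
  fixes blo B a x :: real
  assumes "0 < blo" "0 < B" "1 / B < a" "a * exp (- x) \<le> 1 / blo"
  shows "- ln (B / blo) < x"
proof -
  have "0 < 1 / B" using assms(2) by simp
  with assms(3) have a: "0 < a" by linarith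
  have "exp (- x) \<le> 1 / (blo * a)" using assms(1,4) a by (simp add: field_simps)
  also have "\<dots> < B / blo" using assms(1-3) a by (simp add: field_simps)
  also have "\<dots> = exp (ln (B / blo))" using assms(1,2) by simp
  finally show ?thesis by simp
qed

section \<open>The backward recursion\<close>

definition A_equation ::
    "real \<Rightarrow> (nat \<Rightarrow> real) \<Rightarrow> (nat \<Rightarrow> real) \<Rightarrow> (nat \<Rightarrow> nat \<Rightarrow> real) \<Rightarrow> (nat \<Rightarrow> nat \<Rightarrow> real)
      \<Rightarrow> (nat \<Rightarrow> real) \<Rightarrow> (nat \<Rightarrow> nat \<Rightarrow> real) \<Rightarrow> nat \<Rightarrow> bool" where
  "A_equation lam \<alpha> \<rho> \<mu> \<sigma> A k j \<longleftrightarrow>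
     1 / A j = beta_Sigma \<rho> \<alpha> \<mu> \<sigma> j + lam
       - (alpha_Sigma \<alpha> j *
           (\<Sum>i=1..j. lam * A (j+1) * exp (- \<alpha> i * (k i (j+1) - k i j)) / \<alpha> i))
         * (1 / A j)"

definition k_equation ::
    "real \<Rightarrow> (nat \<Rightarrow> real) \<Rightarrow> (nat \<Rightarrow> real) \<Rightarrow> (nat \<Rightarrow> nat \<Rightarrow> real) \<Rightarrow> (nat \<Rightarrow> nat \<Rightarrow> real)
      \<Rightarrow> (nat \<Rightarrow> real) \<Rightarrow> (nat \<Rightarrow> nat \<Rightarrow> real) \<Rightarrow> nat \<Rightarrow> nat \<Rightarrow> bool" where
  "k_equation lam \<alpha> \<rho> \<mu> \<sigma> A k i j \<longleftrightarrow>
     k i j = ((beta \<rho> \<alpha> \<mu> \<sigma> i j + lam) * A j - 1) / \<alpha> i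
       - lam * A (j+1) * exp (- \<alpha> i * (k i (j+1) - k i j)) / \<alpha> i"

lemma lemma_system_0:
  "lemma_system s 0 lam \<alpha> \<rho> \<mu> \<sigma> A k \<longleftrightarrow>
     A s = 1 / beta_Sigma \<rho> \<alpha> \<mu> \<sigma> s \<and>
     (\<forall>i\<in>{1..s}. k i s = (beta \<rho> \<alpha> \<mu> \<sigma> i s * A s - 1) / \<alpha> i)"
  by (simp add: lemma_system_def)

lemma lemma_system_Suc:
  "lemma_system s (Suc d) lam \<alpha> \<rho> \<mu> \<sigma> A k \<longleftrightarrow>
     lemma_system (Suc s) d lam \<alpha> \<rho> \<mu> \<sigma> A k \<and> A_equation lam \<alpha> \<rho> \<mu> \<sigma> A k s \<and>
     (\<forall>i\<in>{1..s}. k_equation lam \<alpha> \<rho> \<mu> \<sigma> A k i s)"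
proof -
  have split: "(\<forall>j. s \<le> j \<and> j < s + Suc d \<longrightarrow> P j) \<longleftrightarrow>
      P s \<and> (\<forall>j. Suc s \<le> j \<and> j < Suc s + d \<longrightarrow> P j)" for P :: "nat \<Rightarrow> bool"
    by (metis Suc_le_eq add_Suc add_Suc_right le_eq_less_or_eq less_add_Suc1 order.refl)
  show ?thesis
    unfolding lemma_system_def A_equation_def k_equation_def split
    by (simp only: add_Suc add_Suc_right) blast
qed

lemma lemma_system_cong:
  assumes "\<And>j. s \<le> j \<Longrightarrow> A' j = A j" "\<And>i j. s \<le> j \<Longrightarrow> k' i j = k i j"
  shows "lemma_system s d lam \<alpha> \<rho> \<mu> \<sigma> A' k' = lemma_system s d lam \<alpha> \<rho> \<mu> \<sigma> A k"
  unfolding lemma_system_def using assms by simp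

lemma k_equation_iff:
  assumes "0 < \<alpha> i"
  shows "k_equation lam \<alpha> \<rho> \<mu> \<sigma> A k i j \<longleftrightarrow>
    \<alpha> i * k i j + lam * A (j+1) * exp (- \<alpha> i * k i (j+1)) * exp (\<alpha> i * k i j)
      = (beta \<rho> \<alpha> \<mu> \<sigma> i j + lam) * A j - 1"
proof -
  have exp_split: "exp (- \<alpha> i * (k i (j+1) - k i j)) = exp (- \<alpha> i * k i (j+1)) * exp (\<alpha> i * k i j)"
    by (simp add: exp_add[symmetric] algebra_simps)
  have solve: "u = v / \<alpha> i - w / \<alpha> i \<longleftrightarrow> \<alpha> i * u + w = v" for u v w :: real
    using assms by (auto simp: field_simps)
  show ?thesis
    unfolding k_equation_def exp_split solve by (simp add: mult.assoc)
qed

lemma A_equation_iff: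
  assumes "1 \<le> j" "\<forall>i\<in>{1..j}. 0 < \<alpha> i" "0 < A j"
    and k_eqs: "\<forall>i\<in>{1..j}. k_equation lam \<alpha> \<rho> \<mu> \<sigma> A k i j"
  shows "A_equation lam \<alpha> \<rho> \<mu> \<sigma> A k j \<longleftrightarrow> (\<Sum>i=1..j. k i j) = 0"
proof -
  let ?P = "\<Sum>i=1..j. 1 / \<alpha> i" and ?Q = "\<Sum>i=1..j. beta \<rho> \<alpha> \<mu> \<sigma> i j / \<alpha> i"
  have P: "0 < ?P" using assms(1,2) by (intro sum_pos) auto
  have "(\<Sum>i=1..j. lam * A (j+1) * exp (- \<alpha> i * (k i (j+1) - k i j)) / \<alpha> i)
      = (\<Sum>i=1..j. A j * (beta \<rho> \<alpha> \<mu> \<sigma> i j / \<alpha> i) + (lam * A j - 1) * (1 / \<alpha> i) - k i j)"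
  proof (rule sum.cong)
    fix i assume i: "i \<in> {1..j}"
    with k_eqs have "lam * A (j+1) * exp (- \<alpha> i * (k i (j+1) - k i j)) / \<alpha> i
        = ((beta \<rho> \<alpha> \<mu> \<sigma> i j + lam) * A j - 1) / \<alpha> i - k i j"
      unfolding k_equation_def by fastforce
    also have "\<dots> = A j * (beta \<rho> \<alpha> \<mu> \<sigma> i j / \<alpha> i) + (lam * A j - 1) * (1 / \<alpha> i) - k i j"
      by (simp add: algebra_simps add_divide_distrib diff_divide_distrib)
    finally show "lam * A (j+1) * exp (- \<alpha> i * (k i (j+1) - k i j)) / \<alpha> i
        = A j * (beta \<rho> \<alpha> \<mu> \<sigma> i j / \<alpha> i) + (lam * A j - 1) * (1 / \<alpha> i) - k i j" .
  qed simp
  also have "\<dots> = A j * ?Q + (lam * A j - 1) * ?P - (\<Sum>i=1..j. k i j)"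
    by (simp add: sum.distrib sum_subtractf sum_distrib_left)
  finally have S: "(\<Sum>i=1..j. lam * A (j+1) * exp (- \<alpha> i * (k i (j+1) - k i j)) / \<alpha> i)
      = A j * ?Q + (lam * A j - 1) * ?P - (\<Sum>i=1..j. k i j)" .
  have "1 / a = inverse p * q + lam - inverse p * (a * q + (lam * a - 1) * p - r) * (1 / a)
      \<longleftrightarrow> r = 0" if "0 < a" "0 < p" for a p q r :: real
    using that by (simp add: field_simps)
  from this[OF assms(3) P] show ?thesis
    unfolding A_equation_def beta_Sigma_def alpha_Sigma_def S .
qed

lemma lemma_system_0_iff_step_system:
  assumes "1 \<le> s" "\<forall>i\<in>{1..s}. 0 < \<alpha> i \<and> 0 < beta \<rho> \<alpha> \<mu> \<sigma> i s"
  shows "lemma_system s 0 lam \<alpha> \<rho> \<mu> \<sigma> A k \<longleftrightarrow>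
    step_system {1..s} (\<lambda>i. 1 / \<alpha> i) (\<lambda>i. beta \<rho> \<alpha> \<mu> \<sigma> i s) (\<lambda>_. 0) (A s) (\<lambda>i. \<alpha> i * k i s)"
proof -
  let ?P = "\<Sum>i=1..s. 1 / \<alpha> i" and ?Q = "\<Sum>i=1..s. beta \<rho> \<alpha> \<mu> \<sigma> i s / \<alpha> i"
  have P: "0 < ?P" and Q: "0 < ?Q" using assms by (auto intro!: sum_pos)
  have weighted: "(\<Sum>i=1..s. 1 / \<alpha> i * (\<alpha> i * k i s)) = (\<Sum>i=1..s. k i s)"
    using assms(2) by (intro sum.cong) force+
  have k_iff: "(\<forall>i\<in>{1..s}. k i s = (beta \<rho> \<alpha> \<mu> \<sigma> i s * A s - 1) / \<alpha> i) \<longleftrightarrow>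
      (\<forall>i\<in>{1..s}. \<alpha> i * k i s + 0 * exp (\<alpha> i * k i s) = beta \<rho> \<alpha> \<mu> \<sigma> i s * A s - 1)"
    using assms(2) by (auto simp: field_simps)
  have "(\<Sum>i=1..s. k i s) = A s * ?Q - ?P"
    if "\<forall>i\<in>{1..s}. k i s = (beta \<rho> \<alpha> \<mu> \<sigma> i s * A s - 1) / \<alpha> i"
    using that by (simp add: sum_subtractf sum_distrib_left diff_divide_distrib ac_simps)
  moreover have "A s = 1 / beta_Sigma \<rho> \<alpha> \<mu> \<sigma> s \<longleftrightarrow> A s * ?Q - ?P = 0"
    unfolding beta_Sigma_def alpha_Sigma_def using P Q by (auto simp: field_simps)
  ultimately show ?thesis
    unfolding lemma_system_0 step_system_def weighted k_iff[symmetric] by auto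
qed

lemma lemma_system_Suc_iff_step_system:
  assumes "1 \<le> s" "\<forall>i\<in>{1..s}. 0 < \<alpha> i" "0 < A s"
  shows "lemma_system s (Suc d) lam \<alpha> \<rho> \<mu> \<sigma> A k \<longleftrightarrow>
    lemma_system (Suc s) d lam \<alpha> \<rho> \<mu> \<sigma> A k \<and>
    step_system {1..s} (\<lambda>i. 1 / \<alpha> i) (\<lambda>i. beta \<rho> \<alpha> \<mu> \<sigma> i s + lam)
      (\<lambda>i. lam * A (s+1) * exp (- \<alpha> i * k i (s+1))) (A s) (\<lambda>i. \<alpha> i * k i s)"
proof -
  have weighted: "(\<Sum>i=1..s. 1 / \<alpha> i * (\<alpha> i * k i s)) = (\<Sum>i=1..s. k i s)"
    using assms(2) by (intro sum.cong) force+
  have "(\<forall>i\<in>{1..s}. k_equation lam \<alpha> \<rho> \<mu> \<sigma> A k i s) \<longleftrightarrow>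
      (\<forall>i\<in>{1..s}. \<alpha> i * k i s + lam * A (s+1) * exp (- \<alpha> i * k i (s+1)) * exp (\<alpha> i * k i s)
        = (beta \<rho> \<alpha> \<mu> \<sigma> i s + lam) * A s - 1)"
    using k_equation_iff assms(2) by blast
  then show ?thesis
    unfolding lemma_system_Suc step_system_def weighted
    using A_equation_iff[of s \<alpha> A lam \<rho> \<mu> \<sigma> k] assms
    by blast
qed

definition solution_bounds ::
    "real \<Rightarrow> real \<Rightarrow> real \<Rightarrow> (nat \<Rightarrow> real) \<Rightarrow> (nat \<Rightarrow> real) \<Rightarrow> (nat \<Rightarrow> nat \<Rightarrow> real) \<Rightarrow> nat \<Rightarrow> bool" where
  "solution_bounds blo bhi lam \<alpha> A k j \<longleftrightarrow>
     1 / (bhi + lam) < A j \<and> A j \<le> 1 / blo \<and>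
     (\<forall>i\<in>{1..j}. A j * exp (- \<alpha> i * k i j) \<le> 1 / blo \<and> \<alpha> i * k i j \<le> (bhi + lam) / blo - 1)"

context
  fixes N0 :: nat and lam blo bhi :: real
    and \<alpha> \<rho> :: "nat \<Rightarrow> real" and \<mu> \<sigma> :: "nat \<Rightarrow> nat \<Rightarrow> real"
  assumes N0: "1 \<le> N0" and lam: "0 < lam" and alpha_pos: "\<And>i. 1 \<le> i \<Longrightarrow> 0 < \<alpha> i"
    and blo: "0 < blo"
    and beta_bounds: "\<And>i j. N0 \<le> j \<Longrightarrow> 1 \<le> i \<Longrightarrow> i \<le> j \<Longrightarrow>
      blo \<le> beta \<rho> \<alpha> \<mu> \<sigma> i j \<and> beta \<rho> \<alpha> \<mu> \<sigma> i j \<le> bhi"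
begin

lemma bhi_lam_pos: "0 < bhi + lam"
  using beta_bounds[of N0 1] N0 blo lam by force

lemma solution_bounds_pos: "solution_bounds blo bhi lam \<alpha> A k j \<Longrightarrow> 0 < A j"
  unfolding solution_bounds_def using bhi_lam_pos by (smt (verit) divide_pos_pos)

lemma step_coefficients:
  assumes "N0 \<le> s" "0 \<le> l" "\<forall>i\<in>{1..s}. 0 \<le> c i"
  shows "\<forall>i\<in>{1..s}. 0 < 1 / \<alpha> i \<and> 0 < beta \<rho> \<alpha> \<mu> \<sigma> i s + l \<and> 0 \<le> c i"
proof
  fix i assume i: "i \<in> {1..s}"
  then have "blo \<le> beta \<rho> \<alpha> \<mu> \<sigma> i s" using beta_bounds assms(1) by auto
  then show "0 < 1 / \<alpha> i \<and> 0 < beta \<rho> \<alpha> \<mu> \<sigma> i s + l \<and> 0 \<le> c i"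
    using alpha_pos i blo assms(2,3) by auto
qed

text \<open>The strict lower bound on \<open>A s\<close> comes from \<open>c > 0\<close> in a proper step and from
  \<open>lam > 0\<close> in the terminal step (\<open>l = 0\<close>).\<close>

lemma solution_bounds_of_step_system:
  assumes s: "N0 \<le> s" and l: "0 \<le> l" "l \<le> lam"
    and c: "\<forall>i\<in>{1..s}. 0 \<le> c i \<and> c i \<le> l / blo" and strict: "l < lam \<or> (\<forall>i\<in>{1..s}. 0 < c i)"
    and sol: "step_system {1..s} (\<lambda>i. 1 / \<alpha> i) (\<lambda>i. beta \<rho> \<alpha> \<mu> \<sigma> i s + l) c (A s) (\<lambda>i. \<alpha> i * k i s)"
  shows "solution_bounds blo bhi lam \<alpha> A k s"
proof -
  have I: "finite {1..s}" "{1..s} \<noteq> {}" using s N0 by auto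
  have coef: "\<forall>i\<in>{1..s}. 0 < 1 / \<alpha> i \<and> 0 \<le> c i \<and> c i \<le> l / blo \<and>
      blo \<le> beta \<rho> \<alpha> \<mu> \<sigma> i s \<and> beta \<rho> \<alpha> \<mu> \<sigma> i s \<le> bhi"
    using c s alpha_pos beta_bounds by force
  note bounds = step_system_bounds[OF sol I blo l(1) coef]
  obtain i where i: "i \<in> {1..s}" "1 + c i \<le> (bhi + l) * A s" using bounds(1) by blast
  have ci: "0 \<le> c i" and "blo \<le> bhi" using coef i(1) by auto
  then have "0 < bhi + l" using blo l by linarith
  moreover have "0 < (bhi + l) * A s" using i(2) ci by linarith
  ultimately have A_pos: "0 < A s" by (simp add: zero_less_mult_iff)
  have "1 < (bhi + lam) * A s"
    using strict
  proof
    assume "l < lam"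
    then have "(bhi + l) * A s < (bhi + lam) * A s" using A_pos by simp
    with i(2) ci show ?thesis by linarith
  next
    assume "\<forall>i\<in>{1..s}. 0 < c i"
    then have "0 < c i" using i(1) by blast
    moreover have "(bhi + l) * A s \<le> (bhi + lam) * A s" using A_pos l by simp
    ultimately show ?thesis using i(2) by linarith
  qed
  then have "1 / (bhi + lam) < A s" using bhi_lam_pos by (simp add: field_simps)
  moreover have "(bhi + l) / blo \<le> (bhi + lam) / blo" using l blo by (simp add: divide_right_mono)
  ultimately show ?thesis
    unfolding solution_bounds_def using bounds(2,3) by force
qed

lemma lemma_system_0_exists:
  assumes "N0 \<le> s"
  shows "\<exists>A k. lemma_system s 0 lam \<alpha> \<rho> \<mu> \<sigma> A k \<and> solution_bounds blo bhi lam \<alpha> A k s"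
proof -
  have I: "finite {1..s}" "{1..s} \<noteq> {}" and s: "1 \<le> s" using assms N0 by auto
  have pos: "\<forall>i\<in>{1..s}. 0 < \<alpha> i \<and> 0 < beta \<rho> \<alpha> \<mu> \<sigma> i s"
    using assms N0 alpha_pos beta_bounds blo by force
  then have coef: "\<forall>i\<in>{1..s}. 0 < 1 / \<alpha> i \<and> 0 < beta \<rho> \<alpha> \<mu> \<sigma> i s \<and> 0 \<le> (0::real)"
    by simp
  obtain a x where sol: "step_system {1..s} (\<lambda>i. 1 / \<alpha> i) (\<lambda>i. beta \<rho> \<alpha> \<mu> \<sigma> i s) (\<lambda>_. 0) a x"
    using step_system_exists[OF I coef] by blast
  define A :: "nat \<Rightarrow> real" where "A = (\<lambda>_. a)"
  define k where "k i j = x i / \<alpha> i" for i j :: nat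
  have "\<forall>i\<in>{1..s}. \<alpha> i * k i s = x i" using pos by (force simp: k_def)
  then have sol': "step_system {1..s} (\<lambda>i. 1 / \<alpha> i) (\<lambda>i. beta \<rho> \<alpha> \<mu> \<sigma> i s) (\<lambda>_. 0)
      (A s) (\<lambda>i. \<alpha> i * k i s)"
    using sol step_system_cong[of "{1..s}" "\<lambda>_. 0" "\<lambda>_. 0" "\<lambda>i. \<alpha> i * k i s" x]
    by (simp add: A_def)
  then have "lemma_system s 0 lam \<alpha> \<rho> \<mu> \<sigma> A k"
    using lemma_system_0_iff_step_system[OF s pos] by blast
  moreover have "solution_bounds blo bhi lam \<alpha> A k s"
    using assms lam sol' by (intro solution_bounds_of_step_system[where l = 0 and c = "\<lambda>_. 0"]) simp_all
  ultimately show ?thesis by blast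
qed

lemma lemma_system_Suc_exists:
  assumes s: "N0 \<le> s" and sys: "lemma_system (Suc s) d lam \<alpha> \<rho> \<mu> \<sigma> A k"
    and bounds: "solution_bounds blo bhi lam \<alpha> A k (Suc s)"
  defines "k' x \<equiv> \<lambda>i j. if j = s then x i else k i j"
  shows "\<exists>a x. lemma_system s (Suc d) lam \<alpha> \<rho> \<mu> \<sigma> (A(s := a)) (k' x) \<and>
    solution_bounds blo bhi lam \<alpha> (A(s := a)) (k' x) s"
proof -
  have I: "finite {1..s}" "{1..s} \<noteq> {}" and "1 \<le> s" using s N0 by auto
  have alpha: "\<forall>i\<in>{1..s}. 0 < \<alpha> i" using alpha_pos by simp
  define c where "c i = lam * A (s+1) * exp (- \<alpha> i * k i (s+1))" for i
  have c: "\<forall>i\<in>{1..s}. 0 < c i \<and> c i \<le> lam / blo"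
  proof
    fix i assume "i \<in> {1..s}"
    then have "0 < A (s+1)" "A (s+1) * exp (- \<alpha> i * k i (s+1)) \<le> 1 / blo"
      using bounds solution_bounds_pos unfolding solution_bounds_def by auto
    then show "0 < c i \<and> c i \<le> lam / blo"
      using lam mult_left_mono[of _ "1 / blo" lam] by (auto simp: c_def mult.assoc)
  qed
  then have coef: "\<forall>i\<in>{1..s}. 0 < 1 / \<alpha> i \<and> 0 < beta \<rho> \<alpha> \<mu> \<sigma> i s + lam \<and> 0 \<le> c i"
    using step_coefficients[OF s less_imp_le[OF lam]] by auto
  obtain a x where sol: "step_system {1..s} (\<lambda>i. 1 / \<alpha> i) (\<lambda>i. beta \<rho> \<alpha> \<mu> \<sigma> i s + lam) c a x"
    using step_system_exists[OF I coef] by blast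
  let ?A = "A(s := a)" and ?k = "k' (\<lambda>i. x i / \<alpha> i)"
  have "\<forall>i\<in>{1..s}. \<alpha> i * ?k i s = x i" using alpha by (force simp: k'_def)
  then have sol': "step_system {1..s} (\<lambda>i. 1 / \<alpha> i) (\<lambda>i. beta \<rho> \<alpha> \<mu> \<sigma> i s + lam) c
      (?A s) (\<lambda>i. \<alpha> i * ?k i s)"
    using sol step_system_cong[of "{1..s}" c c "\<lambda>i. \<alpha> i * ?k i s" x] by simp
  have bounds_s: "solution_bounds blo bhi lam \<alpha> ?A ?k s"
    by (rule solution_bounds_of_step_system[where l = lam and A = ?A and k = ?k, OF s _ _ _ _ sol'])
      (use lam c in auto)
  have "(\<lambda>i. lam * ?A (s+1) * exp (- \<alpha> i * ?k i (s+1))) = c"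
    by (simp add: k'_def c_def fun_eq_iff)
  with sol' have "step_system {1..s} (\<lambda>i. 1 / \<alpha> i) (\<lambda>i. beta \<rho> \<alpha> \<mu> \<sigma> i s + lam)
      (\<lambda>i. lam * ?A (s+1) * exp (- \<alpha> i * ?k i (s+1))) (?A s) (\<lambda>i. \<alpha> i * ?k i s)"
    by simp
  moreover have "lemma_system (Suc s) d lam \<alpha> \<rho> \<mu> \<sigma> ?A ?k"
    using sys by (subst lemma_system_cong[where A = A and k = k]) (simp_all add: k'_def)
  ultimately have "lemma_system s (Suc d) lam \<alpha> \<rho> \<mu> \<sigma> ?A ?k"
    using lemma_system_Suc_iff_step_system[where A = "?A" and k = "?k",
        OF \<open>1 \<le> s\<close> alpha solution_bounds_pos[OF bounds_s]] by blast
  with bounds_s show ?thesis by blast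
qed

lemma lemma_system_exists:
  assumes "N0 \<le> s"
  shows "\<exists>A k. lemma_system s d lam \<alpha> \<rho> \<mu> \<sigma> A k \<and>
    (\<forall>j\<in>{s..s+d}. solution_bounds blo bhi lam \<alpha> A k j)"
  using assms
proof (induction d arbitrary: s)
  case 0
  then show ?case using lemma_system_0_exists by simp
next
  case (Suc d)
  have "N0 \<le> Suc s" using Suc.prems by simp
  then obtain A k where sys: "lemma_system (Suc s) d lam \<alpha> \<rho> \<mu> \<sigma> A k"
    and bounds: "\<forall>j\<in>{Suc s..Suc s+d}. solution_bounds blo bhi lam \<alpha> A k j"
    using Suc.IH by blast
  have "solution_bounds blo bhi lam \<alpha> A k (Suc s)" using bounds by simp
  then obtain a x where
      sys': "lemma_system s (Suc d) lam \<alpha> \<rho> \<mu> \<sigma> (A(s := a)) (\<lambda>i j. if j = s then x i else k i j)"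
    and bounds_s: "solution_bounds blo bhi lam \<alpha> (A(s := a)) (\<lambda>i j. if j = s then x i else k i j) s"
    using lemma_system_Suc_exists[OF Suc.prems sys] by blast
  have "solution_bounds blo bhi lam \<alpha> (A(s := a)) (\<lambda>i j. if j = s then x i else k i j) j"
    if "j \<in> {s..s + Suc d}" for j
  proof (cases "j = s")
    case False
    with that bounds have "solution_bounds blo bhi lam \<alpha> A k j" by auto
    with False show ?thesis by (simp add: solution_bounds_def)
  qed (use bounds_s in simp)
  with sys' show ?case by blast
qed

lemma lemma_system_0_unique:
  assumes "N0 \<le> s"
    and "lemma_system s 0 lam \<alpha> \<rho> \<mu> \<sigma> A k" "lemma_system s 0 lam \<alpha> \<rho> \<mu> \<sigma> A' k'"
  shows "A' s = A s \<and> (\<forall>i\<in>{1..s}. k' i s = k i s)"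
proof -
  have I: "finite {1..s}" "{1..s} \<noteq> {}" and s: "1 \<le> s" using assms N0 by auto
  have pos: "\<forall>i\<in>{1..s}. 0 < \<alpha> i \<and> 0 < beta \<rho> \<alpha> \<mu> \<sigma> i s"
    using assms N0 alpha_pos beta_bounds blo by force
  then have coef: "\<forall>i\<in>{1..s}. 0 < 1 / \<alpha> i \<and> 0 < beta \<rho> \<alpha> \<mu> \<sigma> i s \<and> 0 \<le> (0::real)"
    by simp
  have "A' s = A s \<and> (\<forall>i\<in>{1..s}. \<alpha> i * k' i s = \<alpha> i * k i s)"
    using step_system_unique[OF I coef]
      iffD1[OF lemma_system_0_iff_step_system[OF s pos] assms(2)]
      iffD1[OF lemma_system_0_iff_step_system[OF s pos] assms(3)] .
  then show ?thesis using pos by fastforce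
qed

lemma lemma_system_Suc_unique_head:
  assumes s: "N0 \<le> s"
    and sys: "lemma_system s (Suc d) lam \<alpha> \<rho> \<mu> \<sigma> A k" "lemma_system s (Suc d) lam \<alpha> \<rho> \<mu> \<sigma> A' k'"
    and pos: "0 < A s" "0 < A' s" "0 < A (Suc s)"
    and next_eq: "A' (Suc s) = A (Suc s)" "\<forall>i\<in>{1..s}. k' i (Suc s) = k i (Suc s)"
  shows "A' s = A s \<and> (\<forall>i\<in>{1..s}. k' i s = k i s)"
proof -
  have I: "finite {1..s}" "{1..s} \<noteq> {}" and "1 \<le> s" using s N0 by auto
  have alpha: "\<forall>i\<in>{1..s}. 0 < \<alpha> i" using alpha_pos by simp
  let ?c = "\<lambda>i. lam * A (s+1) * exp (- \<alpha> i * k i (s+1))"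
  have "\<forall>i\<in>{1..s}. 0 \<le> ?c i" using pos(3) lam by simp
  then have coef: "\<forall>i\<in>{1..s}. 0 < 1 / \<alpha> i \<and> 0 < beta \<rho> \<alpha> \<mu> \<sigma> i s + lam \<and> 0 \<le> ?c i"
    by (rule step_coefficients[OF s less_imp_le[OF lam]])
  note step_iff = lemma_system_Suc_iff_step_system[OF \<open>1 \<le> s\<close> alpha]
  have step: "step_system {1..s} (\<lambda>i. 1 / \<alpha> i) (\<lambda>i. beta \<rho> \<alpha> \<mu> \<sigma> i s + lam) ?c
      (A s) (\<lambda>i. \<alpha> i * k i s)"
    using iffD1[OF step_iff[where A = A and k = k, OF pos(1)] sys(1)] by (rule conjunct2)
  have "step_system {1..s} (\<lambda>i. 1 / \<alpha> i) (\<lambda>i. beta \<rho> \<alpha> \<mu> \<sigma> i s + lam)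
      (\<lambda>i. lam * A' (s+1) * exp (- \<alpha> i * k' i (s+1))) (A' s) (\<lambda>i. \<alpha> i * k' i s)"
    using iffD1[OF step_iff[where A = A' and k = k', OF pos(2)] sys(2)] by (rule conjunct2)
  moreover have "\<forall>i\<in>{1..s}. lam * A' (s+1) * exp (- \<alpha> i * k' i (s+1)) = ?c i"
    using next_eq by simp
  ultimately have step': "step_system {1..s} (\<lambda>i. 1 / \<alpha> i) (\<lambda>i. beta \<rho> \<alpha> \<mu> \<sigma> i s + lam) ?c
      (A' s) (\<lambda>i. \<alpha> i * k' i s)"
    using step_system_cong[of "{1..s}" "\<lambda>i. lam * A' (s+1) * exp (- \<alpha> i * k' i (s+1))" ?c
        "\<lambda>i. \<alpha> i * k' i s" "\<lambda>i. \<alpha> i * k' i s"] by simp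
  have "A' s = A s \<and> (\<forall>i\<in>{1..s}. \<alpha> i * k' i s = \<alpha> i * k i s)"
    using step_system_unique[OF I coef step step'] .
  then show ?thesis using alpha by fastforce
qed

lemma lemma_system_unique:
  assumes "N0 \<le> s"
    and "lemma_system s d lam \<alpha> \<rho> \<mu> \<sigma> A k" "\<forall>j\<in>{s..s+d}. 0 < A j"
    and "lemma_system s d lam \<alpha> \<rho> \<mu> \<sigma> A' k'" "\<forall>j\<in>{s..s+d}. 0 < A' j"
  shows "\<forall>j\<in>{s..s+d}. A' j = A j \<and> (\<forall>i\<in>{1..j}. k' i j = k i j)"
  using assms
proof (induction d arbitrary: s)
  case 0
  then show ?case using lemma_system_0_unique by simp
next
  case (Suc d)
  have "N0 \<le> Suc s" using Suc.prems(1) by simp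
  moreover have "lemma_system (Suc s) d lam \<alpha> \<rho> \<mu> \<sigma> A k"
    using iffD1[OF lemma_system_Suc Suc.prems(2)] by simp
  moreover have "\<forall>j\<in>{Suc s..Suc s+d}. 0 < A j" using Suc.prems(3) by simp
  moreover have "lemma_system (Suc s) d lam \<alpha> \<rho> \<mu> \<sigma> A' k'"
    using iffD1[OF lemma_system_Suc Suc.prems(4)] by simp
  moreover have "\<forall>j\<in>{Suc s..Suc s+d}. 0 < A' j" using Suc.prems(5) by simp
  ultimately have later: "\<forall>j\<in>{Suc s..Suc s+d}. A' j = A j \<and> (\<forall>i\<in>{1..j}. k' i j = k i j)"
    by (rule Suc.IH)
  have "A' s = A s \<and> (\<forall>i\<in>{1..s}. k' i s = k i s)"
    using Suc.prems later by (intro lemma_system_Suc_unique_head[of s d A k A' k']) simp_all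
  moreover have "j = s \<or> j \<in> {Suc s..Suc s+d}" if "j \<in> {s..s + Suc d}" for j
    using that by (cases "j = s") auto
  ultimately show ?case using later by blast
qed

end

theorem lemma3p4:
  fixes N0 m :: nat and lam blo bhi :: real
    and \<alpha> \<rho> :: "nat \<Rightarrow> real" and \<mu> \<sigma> :: "nat \<Rightarrow> nat \<Rightarrow> real"
  assumes N0: "N0 \<ge> 1"
    and lam: "lam > 0"
    and alpha_pos: "\<And>i. i \<ge> 1 \<Longrightarrow> \<alpha> i > 0"
    and rho_pos: "\<And>i. i \<ge> 1 \<Longrightarrow> \<rho> i > 0"
    and A1_mu: "\<And>i. i \<ge> 1 \<Longrightarrow> \<exists>B. \<forall>j\<ge>max N0 i. \<bar>\<mu> i j\<bar> \<le> B"
    and A1_sigma: "\<And>i. i \<ge> 1 \<Longrightarrow> \<exists>B. \<forall>j\<ge>max N0 i. \<bar>\<sigma> i j\<bar> \<le> B"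
    and A2_pos: "0 < blo" and A2_le: "blo \<le> bhi"
    and A2: "\<And>i j. N0 \<le> j \<Longrightarrow> 1 \<le> i \<Longrightarrow> i \<le> j \<Longrightarrow>
               blo \<le> beta \<rho> \<alpha> \<mu> \<sigma> i j \<and> beta \<rho> \<alpha> \<mu> \<sigma> i j \<le> bhi"
  shows "\<exists>A k.
     lemma_system N0 m lam \<alpha> \<rho> \<mu> \<sigma> A k \<and>
     (\<forall>j\<in>{N0..N0+m}. A j > 0) \<and>
     (\<forall>A' k'. lemma_system N0 m lam \<alpha> \<rho> \<mu> \<sigma> A' k' \<and> (\<forall>j\<in>{N0..N0+m}. A' j > 0) \<longrightarrow>
        (\<forall>j\<in>{N0..N0+m}. A' j = A j \<and> (\<forall>i\<in>{1..j}. k' i j = k i j))) \<and>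
     (\<forall>j\<in>{N0..N0+m}. \<forall>i\<in>{1..j}.
        1 / (bhi + lam) < A j \<and> A j \<le> 1 / blo \<and>
        A j * exp (- \<alpha> i * k i j) \<le> 1 / blo \<and>
        - ln ((bhi + lam) / blo) \<le> \<alpha> i * k i j \<and>
        \<alpha> i * k i j \<le> (bhi + lam) / blo - 1)"
proof -
  note setting = N0 lam alpha_pos A2_pos A2
  obtain A k where sys: "lemma_system N0 m lam \<alpha> \<rho> \<mu> \<sigma> A k"
    and bounds: "\<forall>j\<in>{N0..N0+m}. solution_bounds blo bhi lam \<alpha> A k j"
    using lemma_system_exists[OF setting order.refl] by blast
  have pos: "\<forall>j\<in>{N0..N0+m}. 0 < A j"
    using bounds solution_bounds_pos[OF setting] by blast
  have unique: "\<forall>A' k'. lemma_system N0 m lam \<alpha> \<rho> \<mu> \<sigma> A' k' \<and> (\<forall>j\<in>{N0..N0+m}. A' j > 0) \<longrightarrow>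
      (\<forall>j\<in>{N0..N0+m}. A' j = A j \<and> (\<forall>i\<in>{1..j}. k' i j = k i j))"
    using lemma_system_unique[OF setting order.refl sys pos] by blast
  have "1 / (bhi + lam) < A j \<and> A j \<le> 1 / blo \<and> A j * exp (- \<alpha> i * k i j) \<le> 1 / blo \<and>
      - ln ((bhi + lam) / blo) \<le> \<alpha> i * k i j \<and> \<alpha> i * k i j \<le> (bhi + lam) / blo - 1"
    if "j \<in> {N0..N0+m}" "i \<in> {1..j}" for i j
  proof -
    have "1 / (bhi + lam) < A j" "A j \<le> 1 / blo" "A j * exp (- \<alpha> i * k i j) \<le> 1 / blo"
      "\<alpha> i * k i j \<le> (bhi + lam) / blo - 1"
      using bounds that unfolding solution_bounds_def by auto
    moreover from this have "- ln ((bhi + lam) / blo) < \<alpha> i * k i j"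
      using bhi_lam_pos[OF setting] A2_pos by (intro neg_ln_less_of_bounds) auto
    ultimately show ?thesis by simp
  qed
  with sys pos unique show ?thesis by blast
qed

end
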